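(* Let $(A, \|\cdot\|)$ be a non-archimedean Banach ring, and let $r := (r_1, \ldots, r_n) \in \mathbb{R}^n_{>0}$. Let $\rho$ and $\rho_r$ denote the spectral radii on $A$ and on $A_r := A\{r^{-1}T, rT^{-1}\}$, respectively. Then for any $f = \sum_{\nu\in\mathbb{Z}^n} a_\nu T^\nu \in A_r$, we have \[ \rho_r(f) = \max\{\rho(a_\nu) r^\nu \mid \nu \in \mathbb{Z}^n\}. \]
   Context: $A\{r^{-1}T, rT^{-1}\}$ denotes the Banach ring of Laurent series $\sum_{\nu \in \mathbb{Z}^n} a_\nu T^\nu$ with $a_\nu \in A$ such that $\|a_\nu\| r^\nu \to 0$ as $|\nu| \to \infty$, with norm $\max_\nu \|a_\nu\| r^\nu$, where $r^\nu = r_1^{\nu_1}\cdots r_n^{\nu_n}$. The spectral radius of an element $f$ of a normed ring $(B,\|\cdot\|)$ is $\rho(f) = \lim_{l\to\infty}\|f^l\|^{1/l}$. *)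

theory Defs
  imports Complex_Main
begin

definition nonarch_banach_ring :: "('a::comm_ring_1 \<Rightarrow> real) \<Rightarrow> bool" where
  "nonarch_banach_ring N \<longleftrightarrow>
     (\<forall>x. 0 \<le> N x) \<and> (\<forall>x. N x = 0 \<longleftrightarrow> x = 0) \<and> (\<forall>x. N (- x) = N x) \<and>
     (\<forall>x y. N (x + y) \<le> max (N x) (N y)) \<and>
     (\<forall>x y. N (x * y) \<le> N x * N y) \<and>
     (\<forall>X :: nat \<Rightarrow> 'a. (\<forall>e>0. \<exists>M. \<forall>m\<ge>M. \<forall>k\<ge>M. N (X m - X k) < e) \<longrightarrow>
         (\<exists>L. (\<lambda>k. N (X k - L)) \<longlonglongrightarrow> 0))"

definition rmono :: "('n::finite \<Rightarrow> real) \<Rightarrow> ('n \<Rightarrow> int) \<Rightarrow> real" where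
  "rmono r \<nu> = (\<Prod>i\<in>UNIV. r i powi \<nu> i)"

text \<open>Carrier of A{r^-1 T, r T^-1}: coefficient families with N(a_\<nu>) r^\<nu> \<rightarrow> 0 as |\<nu>| \<rightarrow> \<infinity>.\<close>
definition laurent_ring :: "('a::comm_ring_1 \<Rightarrow> real) \<Rightarrow> ('n::finite \<Rightarrow> real) \<Rightarrow> (('n \<Rightarrow> int) \<Rightarrow> 'a) set" where
  "laurent_ring N r = {f. \<forall>e>0. finite {\<nu>. e \<le> N (f \<nu>) * rmono r \<nu>}}"

text \<open>The norm max_\<nu> N(a_\<nu>) r^\<nu> (the maximum exists on the carrier).\<close>
definition laurent_norm :: "('a::comm_ring_1 \<Rightarrow> real) \<Rightarrow> ('n::finite \<Rightarrow> real) \<Rightarrow> (('n \<Rightarrow> int) \<Rightarrow> 'a) \<Rightarrow> real" where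
  "laurent_norm N r f = Sup (range (\<lambda>\<nu>. N (f \<nu>) * rmono r \<nu>))"

definition has_nsum :: "('a::comm_ring_1 \<Rightarrow> real) \<Rightarrow> ('b \<Rightarrow> 'a) \<Rightarrow> 'b set \<Rightarrow> 'a \<Rightarrow> bool" where
  "has_nsum N g S s \<longleftrightarrow> (\<forall>e>0. \<exists>F. finite F \<and> F \<subseteq> S \<and>
      (\<forall>G. finite G \<and> F \<subseteq> G \<and> G \<subseteq> S \<longrightarrow> N (sum g G - s) < e))"

definition laurent_mult :: "('a::comm_ring_1 \<Rightarrow> real) \<Rightarrow> (('n \<Rightarrow> int) \<Rightarrow> 'a) \<Rightarrow> (('n \<Rightarrow> int) \<Rightarrow> 'a) \<Rightarrow> (('n \<Rightarrow> int) \<Rightarrow> 'a)" where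
  "laurent_mult N f g = (\<lambda>\<nu>. THE s. has_nsum N (\<lambda>\<mu>. f \<mu> * g (\<lambda>i. \<nu> i - \<mu> i)) UNIV s)"

definition laurent_one :: "('n \<Rightarrow> int) \<Rightarrow> 'a::comm_ring_1" where
  "laurent_one = (\<lambda>\<nu>. if \<nu> = (\<lambda>_. 0) then 1 else 0)"

definition laurent_pow :: "('a::comm_ring_1 \<Rightarrow> real) \<Rightarrow> (('n \<Rightarrow> int) \<Rightarrow> 'a) \<Rightarrow> nat \<Rightarrow> (('n \<Rightarrow> int) \<Rightarrow> 'a)" where
  "laurent_pow N f l = (laurent_mult N f ^^ l) laurent_one"

definition spectral_radius :: "('b \<Rightarrow> real) \<Rightarrow> ('b \<Rightarrow> nat \<Rightarrow> 'b) \<Rightarrow> 'b \<Rightarrow> real" where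
  "spectral_radius Nm pw x = lim (\<lambda>l. Nm (pw x l) powr (1 / real l))"

end

theory Submission
  imports Defs
begin

text \<open>
  Let \<open>weight \<nu> = \<rho>(a_\<nu>) r^\<nu>\<close> and let \<open>max_weight\<close> be their maximum, which is attained because
  \<open>weight \<nu> \<le> |a_\<nu>| r^\<nu> \<rightarrow> 0\<close>. Both the norm of \<open>A\<close> and its spectral radius \<open>\<rho>\<close> are ultrametric
  and submultiplicative. Since \<open>\<rho>_r(f)\<close> is the limit of \<open>\<parallel>f^l\<parallel>^(1/l)\<close>, it suffices to squeeze
  \<open>\<parallel>f^l\<parallel>\<close> between \<open>max_weight^l\<close> and \<open>C (max_weight + \<delta>)^l\<close> for every \<open>\<delta> > 0\<close>.

  Upper bound: only the finitely many coefficients in \<open>K = {\<nu>. \<delta> \<le> |a_\<nu>| r^\<nu>}\<close> are large. In a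
  product of \<open>l\<close> coefficients, those indexed by \<open>K\<close> are collected into a monomial in the
  commuting elements \<open>a_\<kappa>\<close>, whose norm grows at most like the product of their spectral radii;
  every other factor contributes at most \<open>max_weight + \<delta>\<close>.

  Lower bound: let \<open>\<nu>0\<close> be an exposed point of the finite set of indices of maximal weight. The
  coefficient of \<open>T^(l \<nu>0)\<close> in \<open>f^l\<close> is \<open>a_\<nu>0^l\<close> plus products that each contain a coefficient
  of weight at most some \<open>M' < max_weight\<close>. As \<open>\<rho>\<close> is ultrametric, the spectral radius of this
  coefficient is at least that of \<open>a_\<nu>0^l\<close>, i.e. at least \<open>max_weight^l r^(-l \<nu>0)\<close>, and it is
  bounded by the norm of the coefficient.
\<close>

locale nonarch_banach =
  fixes N :: "'a::comm_ring_1 \<Rightarrow> real"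
  assumes nonarch_banach_ring: "nonarch_banach_ring N"
begin

lemma N_nonneg: "0 \<le> N x"
  using nonarch_banach_ring unfolding nonarch_banach_ring_def by blast

lemma N_eq_0_iff: "N x = 0 \<longleftrightarrow> x = 0"
  using nonarch_banach_ring unfolding nonarch_banach_ring_def by blast

lemma N_0 [simp]: "N 0 = 0"
  using N_eq_0_iff by blast

lemma N_minus [simp]: "N (- x) = N x"
  using nonarch_banach_ring unfolding nonarch_banach_ring_def by blast

lemma N_add_le: "N (x + y) \<le> max (N x) (N y)"
  using nonarch_banach_ring unfolding nonarch_banach_ring_def by blast

lemma N_mult_le: "N (x * y) \<le> N x * N y"
  using nonarch_banach_ring unfolding nonarch_banach_ring_def by blast

lemma N_Cauchy_convergent:
  "\<forall>e>0. \<exists>M. \<forall>m\<ge>M. \<forall>k\<ge>M. N (X m - X k) < e \<Longrightarrow> \<exists>L. (\<lambda>k. N (X k - L)) \<longlonglongrightarrow> 0"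
  using nonarch_banach_ring unfolding nonarch_banach_ring_def by blast

lemma N_minus_commute: "N (x - y) = N (y - x)"
  by (metis N_minus minus_diff_eq)

lemma N_diff_le: "N (x - y) \<le> max (N x) (N y)"
  using N_add_le[of x "- y"] by simp

lemma N_of_nat_mult_le: "N (of_nat m * x) \<le> N x"
proof (induction m)
  case (Suc m)
  then show ?case using N_add_le[of x "of_nat m * x"] by (simp add: algebra_simps)
qed (simp add: N_nonneg)

lemma N_prod_le: "finite F \<Longrightarrow> N (prod g F) \<le> N 1 * (\<Prod>t\<in>F. N (g t))"
proof (induction F rule: finite_induct)
  case (insert x F)
  have "N (prod g (insert x F)) \<le> N (g x) * N (prod g F)"
    using insert N_mult_le by simp
  also have "\<dots> \<le> N (g x) * (N 1 * (\<Prod>t\<in>F. N (g t)))"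
    using insert by (intro mult_left_mono) (auto simp: N_nonneg)
  finally show ?case
    using insert by (simp add: algebra_simps)
qed simp

lemma N_power_le: "N (x ^ n) \<le> max (N 1) 1 * N x ^ n"
proof (induction n)
  case (Suc n)
  have "N (x ^ Suc n) \<le> N x * N (x ^ n)"
    using N_mult_le by simp
  also have "\<dots> \<le> N x * (max (N 1) 1 * N x ^ n)"
    using Suc by (intro mult_left_mono) (auto simp: N_nonneg)
  finally show ?case
    by (simp add: algebra_simps)
qed simp

end

lemma ultrametric_sum_le:
  fixes \<phi> :: "'a::comm_monoid_add \<Rightarrow> real"
  assumes ultra: "\<And>x y. \<phi> (x + y) \<le> max (\<phi> x) (\<phi> y)"
    and "finite F" "\<phi> 0 \<le> B" "\<And>t. t \<in> F \<Longrightarrow> \<phi> (g t) \<le> B"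
  shows "\<phi> (sum g F) \<le> B"
  using \<open>finite F\<close> assms(4)
proof (induction F rule: finite_induct)
  case empty
  then show ?case
    using \<open>\<phi> 0 \<le> B\<close> by simp
next
  case (insert x F)
  have "\<phi> (sum g (insert x F)) = \<phi> (g x + sum g F)"
    using insert.hyps by simp
  also have "\<dots> \<le> max (\<phi> (g x)) (\<phi> (sum g F))"
    by (rule ultra)
  also have "\<dots> \<le> B"
    using insert.prems insert.IH by simp
  finally show ?case .
qed

lemma has_nsumD:
  assumes "has_nsum N g S s" "e > 0"
  obtains F where "finite F" "F \<subseteq> S"
    "\<And>G. finite G \<Longrightarrow> F \<subseteq> G \<Longrightarrow> G \<subseteq> S \<Longrightarrow> N (sum g G - s) < e"
proof -
  obtain F where "finite F" "F \<subseteq> S" "\<forall>G. finite G \<and> F \<subseteq> G \<and> G \<subseteq> S \<longrightarrow> N (sum g G - s) < e"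
    using assms unfolding has_nsum_def by auto
  then show ?thesis
    by (intro that) auto
qed

context nonarch_banach
begin

lemma has_nsum_unique:
  assumes "has_nsum N g S s" "has_nsum N g S s'"
  shows "s = s'"
proof (rule ccontr)
  assume "s \<noteq> s'"
  then have "N (s - s') \<noteq> 0"
    using N_eq_0_iff by simp
  then have e: "N (s - s') > 0"
    using N_nonneg[of "s - s'"] by simp
  obtain F where F: "finite F" "F \<subseteq> S"
    "\<And>G. finite G \<Longrightarrow> F \<subseteq> G \<Longrightarrow> G \<subseteq> S \<Longrightarrow> N (sum g G - s) < N (s - s')"
    using has_nsumD[OF assms(1) e] by blast
  obtain F' where F': "finite F'" "F' \<subseteq> S"
    "\<And>G. finite G \<Longrightarrow> F' \<subseteq> G \<Longrightarrow> G \<subseteq> S \<Longrightarrow> N (sum g G - s') < N (s - s')"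
    using has_nsumD[OF assms(2) e] by blast
  define x where "x = sum g (F \<union> F')"
  have "N (s - s') = N ((x - s') - (x - s))"
    by simp
  also have "\<dots> \<le> max (N (x - s')) (N (x - s))"
    by (rule N_diff_le)
  also have "\<dots> < N (s - s')"
    using F(1,2) F'(1,2) F(3)[of "F \<union> F'"] F'(3)[of "F \<union> F'"] unfolding x_def by simp
  finally show False
    by simp
qed

lemma The_has_nsum:
  assumes "has_nsum N g S s"
  shows "(THE s. has_nsum N g S s) = s"
  using assms by (rule the_equality) (rule has_nsum_unique[OF _ assms])

lemma has_nsum_finite_support:
  assumes "finite K"
  shows "has_nsum N (\<lambda>t. if t \<in> K then h t else 0) UNIV (sum h K)"
proof -
  have "sum (\<lambda>t. if t \<in> K then h t else 0) G = sum h K" if "finite G" "K \<subseteq> G" for G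
    using sum.inter_restrict[OF that(1), of h K] Int_absorb1[OF that(2)] by simp
  then show ?thesis
    unfolding has_nsum_def using assms by (intro allI impI exI[of _ K]) auto
qed

lemma has_nsum_left_mult:
  assumes "has_nsum N g S s"
  shows "has_nsum N (\<lambda>t. c * g t) S (c * s)"
proof (cases "c = 0")
  case True
  then show ?thesis
    unfolding has_nsum_def by (auto intro!: exI[of _ "{}"])
next
  case False
  then have "N c \<noteq> 0"
    using N_eq_0_iff by simp
  then have c: "N c > 0"
    using N_nonneg[of c] by simp
  show ?thesis
    unfolding has_nsum_def
  proof (intro allI impI)
    fix e :: real
    assume "e > 0"
    then have "e / N c > 0"
      using c by simp
    then obtain F where F: "finite F" "F \<subseteq> S"
      "\<And>G. finite G \<Longrightarrow> F \<subseteq> G \<Longrightarrow> G \<subseteq> S \<Longrightarrow> N (sum g G - s) < e / N c"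
      using has_nsumD[OF assms] by blast
    have "N (sum (\<lambda>t. c * g t) G - c * s) < e" if "finite G" "F \<subseteq> G" "G \<subseteq> S" for G
    proof -
      have "sum (\<lambda>t. c * g t) G - c * s = c * (sum g G - s)"
        by (simp add: sum_distrib_left right_diff_distrib)
      then have "N (sum (\<lambda>t. c * g t) G - c * s) \<le> N c * N (sum g G - s)"
        using N_mult_le by simp
      also have "\<dots> < N c * (e / N c)"
        using F(3)[OF that] c by (intro mult_strict_left_mono)
      finally show ?thesis
        using c by simp
    qed
    then show "\<exists>F. finite F \<and> F \<subseteq> S \<and>
        (\<forall>G. finite G \<and> F \<subseteq> G \<and> G \<subseteq> S \<longrightarrow> N (sum (\<lambda>t. c * g t) G - c * s) < e)"
      using F by blast
  qed
qed

lemma has_nsum_diff: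
  assumes "has_nsum N g S s" "has_nsum N h S s'"
  shows "has_nsum N (\<lambda>t. g t - h t) S (s - s')"
  unfolding has_nsum_def
proof (intro allI impI)
  fix e :: real
  assume "e > 0"
  obtain F where F: "finite F" "F \<subseteq> S"
    "\<And>G. finite G \<Longrightarrow> F \<subseteq> G \<Longrightarrow> G \<subseteq> S \<Longrightarrow> N (sum g G - s) < e"
    using has_nsumD[OF assms(1) \<open>e > 0\<close>] by blast
  obtain F' where F': "finite F'" "F' \<subseteq> S"
    "\<And>G. finite G \<Longrightarrow> F' \<subseteq> G \<Longrightarrow> G \<subseteq> S \<Longrightarrow> N (sum h G - s') < e"
    using has_nsumD[OF assms(2) \<open>e > 0\<close>] by blast
  have "N (sum (\<lambda>t. g t - h t) G - (s - s')) < e" if "finite G" "F \<union> F' \<subseteq> G" "G \<subseteq> S" for G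
    using that F(3)[of G] F'(3)[of G] N_diff_le[of "sum g G - s" "sum h G - s'"]
    by (simp add: sum_subtractf algebra_simps)
  then show "\<exists>F. finite F \<and> F \<subseteq> S \<and>
      (\<forall>G. finite G \<and> F \<subseteq> G \<and> G \<subseteq> S \<longrightarrow> N (sum (\<lambda>t. g t - h t) G - (s - s')) < e)"
    using F F' by (intro exI[of _ "F \<union> F'"]) auto
qed

lemma N_sum_le: "finite G \<Longrightarrow> 0 \<le> B \<Longrightarrow> (\<And>t. t \<in> G \<Longrightarrow> N (g t) \<le> B) \<Longrightarrow> N (sum g G) \<le> B"
  by (rule ultrametric_sum_le[OF N_add_le]) simp_all

text \<open>Since \<open>N\<close> is ultrametric, the partial sum over \<open>{t. 1 / (k + 1) \<le> N (g t)}\<close> is within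
  \<open>1 / (k + 1)\<close> of every larger finite partial sum.\<close>

lemma null_family_partial_sums_converge:
  assumes null: "\<And>e. e > 0 \<Longrightarrow> finite {t. e \<le> N (g t)}"
  shows "\<exists>L. (\<lambda>k. N (sum g {t. 1 / real (Suc k) \<le> N (g t)} - L)) \<longlonglongrightarrow> 0"
proof (rule N_Cauchy_convergent, intro allI impI)
  define F where "F k = {t. 1 / real (Suc k) \<le> N (g t)}" for k
  fix e :: real
  assume "e > 0"
  have fin: "finite (F k)" for k
    unfolding F_def by (rule null) simp
  have diff_le: "N (sum g (F m) - sum g (F k)) \<le> 1 / real (Suc k)" if "k \<le> m" for k m
  proof -
    have "1 / real (Suc m) \<le> 1 / real (Suc k)"
      using that by (intro divide_left_mono) auto
    then have "F k \<subseteq> F m"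
      unfolding F_def by auto
    then have "sum g (F m) - sum g (F k) = sum g (F m - F k)"
      using fin by (simp add: sum_diff)
    moreover have "N (sum g (F m - F k)) \<le> 1 / real (Suc k)"
      using fin by (intro N_sum_le) (auto simp: F_def)
    ultimately show ?thesis
      by simp
  qed
  obtain M where M: "\<And>k. k \<ge> M \<Longrightarrow> 1 / real (Suc k) < e"
    using order_tendstoD(2)[OF LIMSEQ_inverse_real_of_nat \<open>e > 0\<close>]
    by (auto simp: eventually_sequentially inverse_eq_divide)
  have "N (sum g (F m) - sum g (F k)) < e" if "m \<ge> M" "k \<ge> M" for m k
  proof (cases "k \<le> m")
    case True
    then show ?thesis
      using diff_le[of k m] M[OF that(2)] by simp
  next
    case False
    then show ?thesis
      using diff_le[of m k] M[OF that(1)] N_minus_commute[of "sum g (F m)"] by simp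
  qed
  then show "\<exists>M. \<forall>m\<ge>M. \<forall>k\<ge>M.
      N (sum g {t. 1 / real (Suc m) \<le> N (g t)} - sum g {t. 1 / real (Suc k) \<le> N (g t)}) < e"
    unfolding F_def by blast
qed

lemma null_family_has_nsum:
  assumes null: "\<And>e. e > 0 \<Longrightarrow> finite {t. e \<le> N (g t)}"
  shows "\<exists>s. has_nsum N g UNIV s"
proof -
  define F where "F k = {t. 1 / real (Suc k) \<le> N (g t)}" for k
  have fin: "finite (F k)" for k
    unfolding F_def by (rule null) simp
  obtain L where L: "(\<lambda>k. N (sum g (F k) - L)) \<longlonglongrightarrow> 0"
    using null_family_partial_sums_converge[OF null] unfolding F_def by blast
  have "\<exists>F'. finite F' \<and> (\<forall>G. finite G \<and> F' \<subseteq> G \<longrightarrow> N (sum g G - L) < e)" if "e > 0" for e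
  proof -
    have "eventually (\<lambda>k. N (sum g (F k) - L) < e \<and> 1 / real (Suc k) < e) sequentially"
      using order_tendstoD(2)[OF L \<open>e > 0\<close>] order_tendstoD(2)[OF LIMSEQ_inverse_real_of_nat \<open>e > 0\<close>]
      by eventually_elim (simp add: inverse_eq_divide)
    then obtain k where k: "N (sum g (F k) - L) < e" "1 / real (Suc k) < e"
      using eventually_happens'[OF sequentially_bot] by blast
    have "N (sum g G - L) < e" if "finite G" "F k \<subseteq> G" for G
    proof -
      have "sum g G - L = sum g (G - F k) + (sum g (F k) - L)"
        using that fin by (simp add: sum_diff)
      then have "N (sum g G - L) \<le> max (N (sum g (G - F k))) (N (sum g (F k) - L))"
        by (simp only: N_add_le)
      moreover have "N (sum g (G - F k)) \<le> 1 / real (Suc k)"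
        using that by (intro N_sum_le) (auto simp: F_def)
      ultimately show ?thesis
        using k by simp
    qed
    then show ?thesis
      using fin by blast
  qed
  then show ?thesis
    unfolding has_nsum_def by auto
qed

lemma has_nsum_ultrametric_le:
  assumes "has_nsum N g S s" "0 \<le> B" "\<And>t. t \<in> S \<Longrightarrow> \<phi> (g t) \<le> B"
    and ultra: "\<And>x y. \<phi> (x + y) \<le> max (\<phi> x) (\<phi> y)" and le_N: "\<And>x. \<phi> x \<le> N x"
  shows "\<phi> s \<le> B"
proof (rule field_le_epsilon)
  fix e :: real
  assume "e > 0"
  then obtain F where F: "finite F" "F \<subseteq> S"
    "\<And>G. finite G \<Longrightarrow> F \<subseteq> G \<Longrightarrow> G \<subseteq> S \<Longrightarrow> N (sum g G - s) < e"
    using has_nsumD[OF assms(1)] by blast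
  have "\<phi> (sum g F) \<le> B"
    using F assms(2,3) le_N[of 0] by (intro ultrametric_sum_le[OF ultra]) auto
  moreover have "\<phi> (s - sum g F) \<le> e"
  proof -
    have "N (s - sum g F) < e"
      using F(3)[of F] F(1,2) N_minus_commute[of "sum g F" s] by simp
    then show ?thesis
      using le_N[of "s - sum g F"] by linarith
  qed
  moreover have "\<phi> s \<le> max (\<phi> (sum g F)) (\<phi> (s - sum g F))"
    using ultra[of "sum g F" "s - sum g F"] by simp
  ultimately show "\<phi> s \<le> B + e"
    using \<open>0 \<le> B\<close> \<open>e > 0\<close> by linarith
qed

end

section \<open>The spectral radius of a non-archimedean Banach ring\<close>

lemma power_powr_inverse:
  assumes "0 \<le> (x::real)" "l \<ge> 1"
  shows "(x ^ l) powr (1 / real l) = x"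
proof (cases "x = 0")
  case False
  then have "(x ^ l) powr (1 / real l) = (x powr real l) powr (1 / real l)"
    using assms(1) by (simp add: powr_realpow)
  then show ?thesis
    using False assms by (simp add: powr_powr)
qed (use assms in simp)

lemma powr_inverse_power:
  assumes "0 \<le> (x::real)" "l \<ge> 1"
  shows "(x powr (1 / real l)) ^ l = x"
proof (cases "x = 0")
  case False
  then have "(x powr (1 / real l)) ^ l = (x powr (1 / real l)) powr real l"
    using assms(1) by (simp add: powr_realpow)
  then show ?thesis
    using False assms by (simp add: powr_powr)
qed (use assms in simp)

lemma eventually_root_less:
  fixes x :: "nat \<Rightarrow> real"
  assumes "\<And>l. 0 \<le> x l" "0 \<le> L" "\<delta> > 0" "\<And>l. x l \<le> C * (L + \<delta>) ^ l"
  shows "eventually (\<lambda>l. x l powr (1 / real l) < L + 2 * \<delta>) sequentially"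
proof -
  define C' where "C' = max C 1"
  have "C * (L + \<delta>) ^ l \<le> C' * (L + \<delta>) ^ l" for l
    unfolding C'_def using assms(2,3) by (intro mult_right_mono) auto
  with assms(4) have C': "x l \<le> C' * (L + \<delta>) ^ l" for l
    by (meson order_trans)
  have "C' > 0"
    by (simp add: C'_def)
  then have "(\<lambda>l. C' powr (1 / real l)) \<longlonglongrightarrow> 1"
    using tendsto_powr[OF tendsto_const lim_1_over_n, of C'] by simp
  moreover have "(L + 2 * \<delta>) / (L + \<delta>) > 1"
    using assms(2,3) by (simp add: field_simps)
  ultimately have "eventually (\<lambda>l. C' powr (1 / real l) < (L + 2 * \<delta>) / (L + \<delta>)) sequentially"
    by (rule order_tendstoD(2))
  then show ?thesis
    using eventually_ge_at_top[of 1]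
  proof eventually_elim
    case (elim l)
    have "x l powr (1 / real l) \<le> (C' * (L + \<delta>) ^ l) powr (1 / real l)"
      using C'[of l] assms(1)[of l] by (intro powr_mono2) auto
    also have "\<dots> = C' powr (1 / real l) * (L + \<delta>)"
      using \<open>C' > 0\<close> assms(2,3) elim(2) by (simp add: powr_mult power_powr_inverse)
    also have "\<dots> < L + 2 * \<delta>"
      using elim(1) assms(2,3) by (simp add: field_simps)
    finally show ?case .
  qed
qed

lemma tendsto_root_of_exponential_bounds:
  fixes x :: "nat \<Rightarrow> real"
  assumes nonneg: "\<And>l. 0 \<le> x l" "0 \<le> L"
    and lower: "\<And>l. l \<ge> 1 \<Longrightarrow> L ^ l \<le> x l"
    and upper: "\<And>\<delta>. \<delta> > 0 \<Longrightarrow> \<exists>C. \<forall>l. x l \<le> C * (L + \<delta>) ^ l"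
  shows "(\<lambda>l. x l powr (1 / real l)) \<longlonglongrightarrow> L"
  unfolding tendsto_iff
proof (intro allI impI)
  fix e :: real
  assume "e > 0"
  then obtain C where "\<And>l. x l \<le> C * (L + e / 2) ^ l"
    using upper[of "e / 2"] by auto
  then have "eventually (\<lambda>l. x l powr (1 / real l) < L + e) sequentially"
    using eventually_root_less[OF nonneg, where \<delta> = "e / 2" and C = C] \<open>e > 0\<close> by simp
  then show "eventually (\<lambda>l. dist (x l powr (1 / real l)) L < e) sequentially"
    using eventually_ge_at_top[of 1]
  proof eventually_elim
    case (elim l)
    have "L = (L ^ l) powr (1 / real l)"
      using power_powr_inverse nonneg(2) elim(2) by simp
    also have "\<dots> \<le> x l powr (1 / real l)"
      using lower[of l] elim(2) nonneg(2) by (intro powr_mono2) auto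
    finally show ?case
      using elim(1) by (simp add: dist_real_def)
  qed
qed

context nonarch_banach
begin

definition \<rho> :: "'a \<Rightarrow> real" where
  "\<rho> a = spectral_radius N (\<lambda>a l. a ^ l) a"

lemma power_norm_le_geometric:
  assumes "m \<ge> 1" "q > 0" "N (a ^ m) \<le> q ^ m"
  shows "\<exists>C. \<forall>l. N (a ^ l) \<le> C * q ^ l"
proof -
  define D where "D = max (N 1) 1"
  define C where "C = D * (\<Sum>s<m. N (a ^ s) / q ^ s)"
  have "N (a ^ l) \<le> C * q ^ l" for l
  proof -
    define k where "k = l div m"
    define s where "s = l mod m"
    have s: "s < m" "l = m * k + s"
      using \<open>m \<ge> 1\<close> by (simp_all add: k_def s_def)
    have "N (a ^ l) \<le> N ((a ^ m) ^ k) * N (a ^ s)"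
      using N_mult_le[of "(a ^ m) ^ k" "a ^ s"] s(2) by (simp add: power_add power_mult)
    also have "\<dots> \<le> (D * N (a ^ m) ^ k) * N (a ^ s)"
      unfolding D_def by (intro mult_right_mono N_power_le N_nonneg)
    also have "\<dots> \<le> (D * (q ^ m) ^ k) * N (a ^ s)"
      using assms by (intro mult_right_mono mult_left_mono power_mono N_nonneg) (auto simp: D_def)
    also have "\<dots> = D * (N (a ^ s) / q ^ s) * q ^ l"
      using \<open>q > 0\<close> s(2) by (simp add: power_add power_mult[symmetric])
    also have "\<dots> \<le> C * q ^ l"
      unfolding C_def using s(1) \<open>q > 0\<close>
      by (intro mult_right_mono mult_left_mono member_le_sum) (auto simp: D_def N_nonneg)
    finally show ?thesis .
  qed
  then show ?thesis
    by blast
qed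

lemma Inf_root_power_norm_bounds:
  fixes a :: 'a
  defines "L \<equiv> INF l\<in>{1..}. N (a ^ l) powr (1 / real l)"
  shows "0 \<le> L" "l \<ge> 1 \<Longrightarrow> L ^ l \<le> N (a ^ l)"
    "\<delta> > 0 \<Longrightarrow> \<exists>C. \<forall>l. N (a ^ l) \<le> C * (L + \<delta>) ^ l"
proof -
  have bdd: "bdd_below ((\<lambda>l. N (a ^ l) powr (1 / real l)) ` {1..})"
    by (intro bdd_belowI2[of _ 0]) simp
  show L: "0 \<le> L"
    unfolding L_def by (intro cINF_greatest) auto
  show "L ^ l \<le> N (a ^ l)" if "l \<ge> 1"
  proof -
    have "L \<le> N (a ^ l) powr (1 / real l)"
      unfolding L_def using bdd that by (intro cINF_lower) auto
    then have "L ^ l \<le> (N (a ^ l) powr (1 / real l)) ^ l"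
      using L by (intro power_mono) auto
    then show ?thesis
      using powr_inverse_power N_nonneg that by simp
  qed
  show "\<exists>C. \<forall>l. N (a ^ l) \<le> C * (L + \<delta>) ^ l" if "\<delta> > 0"
  proof -
    obtain m where m: "m \<ge> 1" "N (a ^ m) powr (1 / real m) < L + \<delta>"
      using cINF_less_iff[OF _ bdd, of "L + \<delta>"] \<open>\<delta> > 0\<close> unfolding L_def by auto
    have "N (a ^ m) = (N (a ^ m) powr (1 / real m)) ^ m"
      using powr_inverse_power[OF N_nonneg m(1)] by simp
    also have "\<dots> \<le> (L + \<delta>) ^ m"
      using m(2) by (intro power_mono) auto
    finally show ?thesis
      using m(1) L \<open>\<delta> > 0\<close> by (intro power_norm_le_geometric) auto
  qed
qed

lemma
  shows rho_nonneg: "0 \<le> \<rho> a"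
    and rho_power_le: "l \<ge> 1 \<Longrightarrow> \<rho> a ^ l \<le> N (a ^ l)"
    and rho_growth: "\<delta> > 0 \<Longrightarrow> \<exists>C. \<forall>l. N (a ^ l) \<le> C * (\<rho> a + \<delta>) ^ l"
    and tendsto_root_power_norm: "(\<lambda>l. N (a ^ l) powr (1 / real l)) \<longlonglongrightarrow> \<rho> a"
proof -
  define L where "L = (INF l\<in>{1..}. N (a ^ l) powr (1 / real l))"
  note bounds = Inf_root_power_norm_bounds[where a = a, folded L_def]
  have lim: "(\<lambda>l. N (a ^ l) powr (1 / real l)) \<longlonglongrightarrow> L"
    using bounds by (intro tendsto_root_of_exponential_bounds) (auto simp: N_nonneg)
  then have "\<rho> a = L"
    unfolding \<rho>_def spectral_radius_def by (rule limI)
  then show "0 \<le> \<rho> a" "l \<ge> 1 \<Longrightarrow> \<rho> a ^ l \<le> N (a ^ l)"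
    "\<delta> > 0 \<Longrightarrow> \<exists>C. \<forall>l. N (a ^ l) \<le> C * (\<rho> a + \<delta>) ^ l"
    "(\<lambda>l. N (a ^ l) powr (1 / real l)) \<longlonglongrightarrow> \<rho> a"
    using bounds lim by simp_all
qed

lemma rho_le_N: "\<rho> a \<le> N a"
  using rho_power_le[of 1 a] by simp

lemma rho_0 [simp]: "\<rho> 0 = 0"
  using rho_le_N[of 0] rho_nonneg[of 0] by simp

lemma rho_minus [simp]: "\<rho> (- a) = \<rho> a"
proof -
  have "N ((- a) ^ l) = N (a ^ l)" for l
    by (cases "even l") (auto simp: power_minus')
  then show ?thesis
    unfolding \<rho>_def spectral_radius_def by simp
qed

lemma rho_le_of_growth:
  assumes "q > 0" "\<And>l. N (a ^ l) \<le> C * q ^ l"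
  shows "\<rho> a \<le> q"
proof (rule ccontr)
  assume "\<not> \<rho> a \<le> q"
  then have "\<rho> a / q > 1"
    using assms(1) by simp
  then obtain n where n: "\<bar>C\<bar> + 1 < (\<rho> a / q) ^ n"
    using real_arch_pow by blast
  then have "n \<ge> 1"
    by (cases n) auto
  then have "\<rho> a ^ n \<le> C * q ^ n"
    using rho_power_le[of n a] assms(2)[of n] by simp
  then have "(\<rho> a / q) ^ n \<le> C"
    using assms(1) by (simp add: power_divide divide_le_eq)
  then show False
    using n by linarith
qed

lemma rho_1_le: "\<rho> 1 \<le> 1"
  by (rule rho_le_of_growth[where C = "N 1"]) auto

lemma rho_mult_le: "\<rho> (a * b) \<le> \<rho> a * \<rho> b"
proof (rule LIMSEQ_le[OF tendsto_root_power_norm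
      tendsto_mult[OF tendsto_root_power_norm tendsto_root_power_norm]])
  have "N ((a * b) ^ l) powr (1 / real l) \<le> (N (a ^ l) * N (b ^ l)) powr (1 / real l)" for l
    using N_mult_le by (intro powr_mono2) (auto simp: N_nonneg power_mult_distrib)
  then show "\<exists>M. \<forall>l\<ge>M. N ((a * b) ^ l) powr (1 / real l)
      \<le> N (a ^ l) powr (1 / real l) * N (b ^ l) powr (1 / real l)"
    by (simp add: powr_mult N_nonneg)
qed

lemma rho_add_le: "\<rho> (a + b) \<le> max (\<rho> a) (\<rho> b)"
proof (rule field_le_epsilon)
  fix \<delta> :: real
  assume "\<delta> > 0"
  define q where "q = max (\<rho> a) (\<rho> b) + \<delta>"
  have "q > 0"
    using \<open>\<delta> > 0\<close> rho_nonneg[of a] by (simp add: q_def)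
  have growth_q: "\<exists>C\<ge>0. \<forall>l. N (x ^ l) \<le> C * q ^ l" if "\<rho> x \<le> max (\<rho> a) (\<rho> b)" for x
  proof -
    obtain C where C: "\<And>l. N (x ^ l) \<le> C * (\<rho> x + \<delta>) ^ l"
      using rho_growth[OF \<open>\<delta> > 0\<close>] by blast
    have "0 \<le> C"
      using C[of 0] N_nonneg[of 1] by simp
    moreover have "C * (\<rho> x + \<delta>) ^ l \<le> C * q ^ l" for l
      using that \<open>0 \<le> C\<close> \<open>\<delta> > 0\<close> rho_nonneg[of x] by (intro mult_left_mono power_mono) (auto simp: q_def)
    ultimately show ?thesis
      using C order_trans by blast
  qed
  obtain Ca Cb where "0 \<le> Ca" "0 \<le> Cb" and Ca: "\<And>l. N (a ^ l) \<le> Ca * q ^ l"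
    and Cb: "\<And>l. N (b ^ l) \<le> Cb * q ^ l"
    using growth_q[of a] growth_q[of b] by auto
  have "N ((a + b) ^ l) \<le> (Ca * Cb) * q ^ l" for l
    unfolding binomial_ring
  proof (rule ultrametric_sum_le[OF N_add_le])
    show "N 0 \<le> Ca * Cb * q ^ l"
      using \<open>0 \<le> Ca\<close> \<open>0 \<le> Cb\<close> \<open>q > 0\<close> by simp
    fix k
    assume "k \<in> {..l}"
    have "N (of_nat (l choose k) * a ^ k * b ^ (l - k)) \<le> N (a ^ k) * N (b ^ (l - k))"
      using order_trans[OF N_of_nat_mult_le N_mult_le] by (simp add: mult.assoc)
    also have "\<dots> \<le> (Ca * q ^ k) * (Cb * q ^ (l - k))"
      using Ca Cb \<open>0 \<le> Ca\<close> \<open>q > 0\<close> by (intro mult_mono N_nonneg) auto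
    also have "\<dots> = (Ca * Cb) * q ^ l"
      using \<open>k \<in> {..l}\<close> by (simp add: algebra_simps power_add[symmetric])
    finally show "N (of_nat (l choose k) * a ^ k * b ^ (l - k)) \<le> (Ca * Cb) * q ^ l" .
  qed simp
  then show "\<rho> (a + b) \<le> max (\<rho> a) (\<rho> b) + \<delta>"
    using \<open>q > 0\<close> unfolding q_def by (intro rho_le_of_growth)
qed

lemma rho_diff_le: "\<rho> (a - b) \<le> max (\<rho> a) (\<rho> b)"
  using rho_add_le[of a "- b"] by simp

lemma rho_le_of_diff_less: "\<rho> (a - b) < \<rho> b \<Longrightarrow> \<rho> b \<le> \<rho> a"
  using rho_diff_le[of a "a - b"] by (auto simp: le_max_iff_disj)

lemma rho_power_ge: "k \<ge> 1 \<Longrightarrow> \<rho> a ^ k \<le> \<rho> (a ^ k)"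
proof (rule LIMSEQ_le_const[OF tendsto_root_power_norm], intro exI allI impI)
  fix l :: nat
  assume "k \<ge> 1" "l \<ge> 1"
  have "(\<rho> a ^ k) ^ l \<le> N ((a ^ k) ^ l)"
    using rho_power_le[of "k * l" a] \<open>k \<ge> 1\<close> \<open>l \<ge> 1\<close> by (simp add: power_mult)
  then have "((\<rho> a ^ k) ^ l) powr (1 / real l) \<le> N ((a ^ k) ^ l) powr (1 / real l)"
    using rho_nonneg[of a] by (intro powr_mono2) auto
  then show "\<rho> a ^ k \<le> N ((a ^ k) ^ l) powr (1 / real l)"
    using power_powr_inverse[of "\<rho> a ^ k" l] rho_nonneg[of a] \<open>l \<ge> 1\<close> by simp
qed

lemma has_nsum_rho_le:
  assumes "has_nsum N g S s" "0 \<le> B" "\<And>t. t \<in> S \<Longrightarrow> \<rho> (g t) \<le> B"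
  shows "\<rho> s \<le> B"
  using assms rho_add_le rho_le_N by (rule has_nsum_ultrametric_le)

end

section \<open>Laurent series\<close>

lemma rmono_zero [simp]: "rmono r (\<lambda>_. 0) = 1"
  by (simp add: rmono_def)

lemma rmono_pos: "(\<And>i. 0 < r i) \<Longrightarrow> 0 < rmono r \<nu>"
  unfolding rmono_def by (intro prod_pos) auto

lemma rmono_add: "(\<And>i. 0 < r i) \<Longrightarrow> rmono r (\<lambda>i. \<nu> i + \<mu> i) = rmono r \<nu> * rmono r \<mu>"
  unfolding rmono_def by (simp add: power_int_add prod.distrib less_imp_neq[symmetric])

lemma rmono_diff: "(\<And>i. 0 < r i) \<Longrightarrow> rmono r \<nu> = rmono r \<mu> * rmono r (\<lambda>i. \<nu> i - \<mu> i)"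
  using rmono_add[of r \<mu> "\<lambda>i. \<nu> i - \<mu> i"] by simp

lemma rmono_sum:
  assumes "\<And>i. 0 < r i" "finite K"
  shows "rmono r (\<lambda>i. \<Sum>k\<in>K. \<nu> k i) = (\<Prod>k\<in>K. rmono r (\<nu> k))"
  using assms(2) by (induction K rule: finite_induct) (simp_all add: rmono_add[OF assms(1)])

lemma rmono_scale: "(\<And>i. 0 < r i) \<Longrightarrow> rmono r (\<lambda>i. int n * \<nu> i) = rmono r \<nu> ^ n"
  by (induction n) (simp_all add: rmono_add distrib_right)

lemma laurent_pow_0: "laurent_pow N f 0 = laurent_one"
  by (simp add: laurent_pow_def)

lemma laurent_pow_Suc: "laurent_pow N f (Suc l) = laurent_mult N f (laurent_pow N f l)"
  by (simp add: laurent_pow_def)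

lemma laurent_norm_upper:
  "bdd_above (range (\<lambda>\<nu>. N (g \<nu>) * rmono r \<nu>)) \<Longrightarrow> N (g \<nu>) * rmono r \<nu> \<le> laurent_norm N r g"
  unfolding laurent_norm_def by (rule cSUP_upper) auto

lemma laurent_norm_least:
  "(\<And>\<nu>. N (g \<nu>) * rmono r \<nu> \<le> B) \<Longrightarrow> laurent_norm N r g \<le> B"
  unfolding laurent_norm_def by (rule cSUP_least) auto

locale laurent_series = nonarch_banach N for N :: "'a::comm_ring_1 \<Rightarrow> real" +
  fixes r :: "'n::finite \<Rightarrow> real" and f :: "('n \<Rightarrow> int) \<Rightarrow> 'a"
  assumes r_pos: "\<And>i. 0 < r i" and f_laurent: "f \<in> laurent_ring N r"
begin

lemma rmono_r_pos: "0 < rmono r \<nu>"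
  using rmono_pos[OF r_pos] .

lemma weighted_mult_le:
  fixes \<phi> :: "'a \<Rightarrow> real"
  assumes "\<And>x y. \<phi> (x * y) \<le> \<phi> x * \<phi> y" "\<And>x. 0 \<le> \<phi> x"
  shows "\<phi> (x * y) * rmono r \<nu> \<le> (\<phi> x * rmono r \<mu>) * (\<phi> y * rmono r (\<lambda>i. \<nu> i - \<mu> i))"
proof -
  have "\<phi> (x * y) * rmono r \<nu> \<le> (\<phi> x * \<phi> y) * rmono r \<nu>"
    using assms(1) rmono_r_pos by (intro mult_right_mono) (auto intro: less_imp_le)
  then show ?thesis
    using rmono_diff[OF r_pos, where \<nu> = \<nu> and \<mu> = \<mu>] by (simp add: mult_ac)
qed

lemma weighted_ultrametric:
  fixes \<phi> :: "'a \<Rightarrow> real"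
  assumes "\<And>x y. \<phi> (x + y) \<le> max (\<phi> x) (\<phi> y)"
  shows "\<phi> (x + y) * rmono r \<nu> \<le> max (\<phi> x * rmono r \<nu>) (\<phi> y * rmono r \<nu>)"
  using mult_right_mono[OF assms less_imp_le[OF rmono_r_pos]] less_imp_le[OF rmono_r_pos]
  by (simp add: max_mult_distrib_right)

lemma finite_large_coeffs: "e > 0 \<Longrightarrow> finite {\<nu>. e \<le> N (f \<nu>) * rmono r \<nu>}"
  using f_laurent unfolding laurent_ring_def by blast

lemma coeff_le_laurent_norm: "N (f \<nu>) * rmono r \<nu> \<le> laurent_norm N r f"
proof (rule laurent_norm_upper)
  let ?c = "\<lambda>\<nu>. N (f \<nu>) * rmono r \<nu>"
  have "range ?c \<subseteq> {..1} \<union> ?c ` {\<nu>. 1 \<le> ?c \<nu>}"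
    by auto
  moreover have "bdd_above ({..1} \<union> ?c ` {\<nu>. 1 \<le> ?c \<nu>})"
    using finite_large_coeffs[of 1] by simp
  ultimately show "bdd_above (range ?c)"
    by (rule bdd_above_mono[rotated])
qed

lemma laurent_norm_nonneg: "0 \<le> laurent_norm N r f"
  using coeff_le_laurent_norm[of "\<lambda>_. 0"] N_nonneg[of "f (\<lambda>_. 0)"] rmono_r_pos[of "\<lambda>_. 0"]
  by simp

lemma coeff_mult_le:
  assumes "\<And>\<nu>. N (g \<nu>) * rmono r \<nu> \<le> B"
  shows "N (x * g (\<lambda>i. \<nu> i - \<mu> i)) * rmono r \<nu> \<le> (N x * rmono r \<mu>) * B"
proof -
  have "N (x * g (\<lambda>i. \<nu> i - \<mu> i)) * rmono r \<nu>
      \<le> (N x * rmono r \<mu>) * (N (g (\<lambda>i. \<nu> i - \<mu> i)) * rmono r (\<lambda>i. \<nu> i - \<mu> i))"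
    by (rule weighted_mult_le[OF N_mult_le N_nonneg])
  also have "\<dots> \<le> (N x * rmono r \<mu>) * B"
    using assms N_nonneg[of x] rmono_r_pos[of \<mu>] by (intro mult_left_mono) simp_all
  finally show ?thesis .
qed

lemma has_nsum_laurent_mult:
  assumes "\<And>\<nu>. N (g \<nu>) * rmono r \<nu> \<le> B"
  shows "has_nsum N (\<lambda>\<mu>. f \<mu> * g (\<lambda>i. \<nu> i - \<mu> i)) UNIV (laurent_mult N f g \<nu>)"
proof -
  have null: "finite {\<mu>. e \<le> N (f \<mu> * g (\<lambda>i. \<nu> i - \<mu> i))}" if "e > 0" for e
  proof (rule finite_subset)
    show "{\<mu>. e \<le> N (f \<mu> * g (\<lambda>i. \<nu> i - \<mu> i))}
        \<subseteq> {\<mu>. e * rmono r \<nu> / max B 1 \<le> N (f \<mu>) * rmono r \<mu>}"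
    proof safe
      fix \<mu>
      assume "e \<le> N (f \<mu> * g (\<lambda>i. \<nu> i - \<mu> i))"
      then have "e * rmono r \<nu> \<le> N (f \<mu> * g (\<lambda>i. \<nu> i - \<mu> i)) * rmono r \<nu>"
        using rmono_r_pos[of \<nu>] by (intro mult_right_mono) simp_all
      also have "\<dots> \<le> (N (f \<mu>) * rmono r \<mu>) * B"
        by (rule coeff_mult_le[OF assms])
      also have "\<dots> \<le> (N (f \<mu>) * rmono r \<mu>) * max B 1"
        using N_nonneg[of "f \<mu>"] rmono_r_pos[of \<mu>] by (intro mult_left_mono) simp_all
      finally show "e * rmono r \<nu> / max B 1 \<le> N (f \<mu>) * rmono r \<mu>"
        by (simp add: divide_le_eq)
    qed
    show "finite {\<mu>. e * rmono r \<nu> / max B 1 \<le> N (f \<mu>) * rmono r \<mu>}"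
      using that rmono_r_pos[of \<nu>] by (intro finite_large_coeffs) simp
  qed
  obtain s where "has_nsum N (\<lambda>\<mu>. f \<mu> * g (\<lambda>i. \<nu> i - \<mu> i)) UNIV s"
    using null_family_has_nsum[OF null] by blast
  then show ?thesis
    unfolding laurent_mult_def by (simp add: The_has_nsum)
qed

lemma laurent_mult_coeff_le:
  assumes "\<And>\<nu>. N (g \<nu>) * rmono r \<nu> \<le> B"
  shows "N (laurent_mult N f g \<nu>) * rmono r \<nu> \<le> laurent_norm N r f * B"
proof -
  have "0 \<le> N (g \<nu>) * rmono r \<nu>"
    using N_nonneg rmono_r_pos[of \<nu>] by simp
  then have "0 \<le> B"
    using assms[of \<nu>] by linarith
  have term_le: "N (f \<mu> * g (\<lambda>i. \<nu> i - \<mu> i)) * rmono r \<nu> \<le> laurent_norm N r f * B" for \<mu>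
  proof -
    have "N (f \<mu> * g (\<lambda>i. \<nu> i - \<mu> i)) * rmono r \<nu> \<le> (N (f \<mu>) * rmono r \<mu>) * B"
      by (rule coeff_mult_le[OF assms])
    also have "\<dots> \<le> laurent_norm N r f * B"
      using coeff_le_laurent_norm \<open>0 \<le> B\<close> by (rule mult_right_mono)
    finally show ?thesis .
  qed
  have "N (laurent_mult N f g \<nu>) \<le> laurent_norm N r f * B / rmono r \<nu>"
  proof (rule has_nsum_ultrametric_le[OF has_nsum_laurent_mult[OF assms]])
    show "0 \<le> laurent_norm N r f * B / rmono r \<nu>"
      using laurent_norm_nonneg \<open>0 \<le> B\<close> rmono_r_pos[of \<nu>] by simp
    show "N (f \<mu> * g (\<lambda>i. \<nu> i - \<mu> i)) \<le> laurent_norm N r f * B / rmono r \<nu>" for \<mu>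
      using term_le[of \<mu>] rmono_r_pos[of \<nu>] by (simp add: pos_le_divide_eq)
  qed (simp_all add: N_add_le)
  then show ?thesis
    using rmono_r_pos[of \<nu>] by (simp add: pos_le_divide_eq)
qed

lemma laurent_pow_coeff_le:
  "N (laurent_pow N f l \<nu>) * rmono r \<nu> \<le> max (N 1) 1 * laurent_norm N r f ^ l"
proof (induction l arbitrary: \<nu>)
  case 0
  then show ?case
    by (simp add: laurent_pow_0 laurent_one_def le_max_iff_disj)
next
  case (Suc l)
  show ?case
    unfolding laurent_pow_Suc using laurent_mult_coeff_le[OF Suc.IH] by (simp add: mult_ac)
qed

lemma has_nsum_laurent_pow_Suc:
  "has_nsum N (\<lambda>\<mu>. f \<mu> * laurent_pow N f l (\<lambda>i. \<nu> i - \<mu> i)) UNIV (laurent_pow N f (Suc l) \<nu>)"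
  unfolding laurent_pow_Suc by (rule has_nsum_laurent_mult[OF laurent_pow_coeff_le])

lemma coeff_le_laurent_pow_norm:
  "N (laurent_pow N f l \<nu>) * rmono r \<nu> \<le> laurent_norm N r (laurent_pow N f l)"
  by (rule laurent_norm_upper, rule bdd_aboveI2, rule laurent_pow_coeff_le)

lemma laurent_pow_norm_nonneg: "0 \<le> laurent_norm N r (laurent_pow N f l)"
  using coeff_le_laurent_pow_norm[of l "\<lambda>_. 0"] N_nonneg[of "laurent_pow N f l (\<lambda>_. 0)"]
    rmono_r_pos[of "\<lambda>_. 0"] by simp

definition weight :: "('n \<Rightarrow> int) \<Rightarrow> real" where
  "weight \<nu> = \<rho> (f \<nu>) * rmono r \<nu>"

definition max_weight :: real where
  "max_weight = (SUP \<nu>. weight \<nu>)"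

lemma weight_nonneg: "0 \<le> weight \<nu>"
  unfolding weight_def using rho_nonneg rmono_r_pos by (simp add: less_imp_le)

lemma weight_le_coeff: "weight \<nu> \<le> N (f \<nu>) * rmono r \<nu>"
  unfolding weight_def using rho_le_N rmono_r_pos by (intro mult_right_mono) (auto intro: less_imp_le)

lemma finite_large_weights: "e > 0 \<Longrightarrow> finite {\<nu>. e \<le> weight \<nu>}"
  by (rule finite_subset[OF _ finite_large_coeffs]) (auto intro: order_trans[OF _ weight_le_coeff])

lemma weight_attains_max: "\<exists>\<nu>. \<forall>\<mu>. weight \<mu> \<le> weight \<nu>"
proof (cases "\<forall>\<nu>. weight \<nu> = 0")
  case False
  then obtain \<nu>1 where "weight \<nu>1 \<noteq> 0"
    by blast
  then have "weight \<nu>1 > 0"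
    using weight_nonneg[of \<nu>1] by simp
  define T where "T = {\<nu>. weight \<nu>1 \<le> weight \<nu>}"
  have "finite T" "\<nu>1 \<in> T"
    using finite_large_weights[OF \<open>weight \<nu>1 > 0\<close>] by (simp_all add: T_def)
  then have "Max (weight ` T) \<in> weight ` T"
    by (intro Max_in) auto
  then obtain \<nu> where \<nu>: "\<nu> \<in> T" "weight \<nu> = Max (weight ` T)"
    by auto
  have "weight \<mu> \<le> weight \<nu>" for \<mu>
  proof (cases "\<mu> \<in> T")
    case True
    then show ?thesis
      using \<nu>(2) \<open>finite T\<close> by simp
  next
    case False
    then show ?thesis
      using \<nu>(1) by (simp add: T_def)
  qed
  then show ?thesis
    by blast
qed auto

lemma
  shows weight_le_max_weight: "weight \<nu> \<le> max_weight"
    and max_weight_attained: "\<exists>\<nu>. weight \<nu> = max_weight"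
proof -
  obtain \<nu>m where \<nu>m: "\<And>\<mu>. weight \<mu> \<le> weight \<nu>m"
    using weight_attains_max by blast
  then have "max_weight = weight \<nu>m"
    unfolding max_weight_def by (intro cSup_eq_maximum) auto
  then show "weight \<nu> \<le> max_weight" "\<exists>\<nu>. weight \<nu> = max_weight"
    using \<nu>m by auto
qed

lemma max_weight_nonneg: "0 \<le> max_weight"
  using weight_nonneg[of "\<lambda>_. 0"] weight_le_max_weight[of "\<lambda>_. 0"] by simp

end

section \<open>Upper bound for the norms of the powers\<close>

lemma sum_fun_upd_Suc: "finite K \<Longrightarrow> \<mu> \<in> K \<Longrightarrow> sum (e(\<mu> := Suc (e \<mu>))) K = Suc (sum e K)"
  by (simp add: sum.remove cong: sum.cong_simp)

text \<open>\<open>monomial K e\<close> and \<open>monomial_exponent K e\<close> are the coefficient and the exponent of the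
  Laurent monomial \<open>\<Prod>\<kappa>\<in>K. (f \<kappa> T^\<kappa>) ^ e \<kappa>\<close>.\<close>

definition monomial_exponent :: "('n \<Rightarrow> int) set \<Rightarrow> (('n \<Rightarrow> int) \<Rightarrow> nat) \<Rightarrow> 'n \<Rightarrow> int" where
  "monomial_exponent K e = (\<lambda>i. \<Sum>\<kappa>\<in>K. int (e \<kappa>) * \<kappa> i)"

lemma monomial_exponent_fun_upd_Suc:
  "finite K \<Longrightarrow> \<mu> \<in> K \<Longrightarrow>
    monomial_exponent K (e(\<mu> := Suc (e \<mu>))) i = \<mu> i + monomial_exponent K e i"
  unfolding monomial_exponent_def by (simp add: sum.remove algebra_simps cong: sum.cong_simp)

context laurent_series
begin

definition monomial :: "('n \<Rightarrow> int) set \<Rightarrow> (('n \<Rightarrow> int) \<Rightarrow> nat) \<Rightarrow> 'a" where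
  "monomial K e = (\<Prod>\<kappa>\<in>K. f \<kappa> ^ e \<kappa>)"

lemma monomial_fun_upd_Suc:
  "finite K \<Longrightarrow> \<mu> \<in> K \<Longrightarrow> monomial K (e(\<mu> := Suc (e \<mu>))) = f \<mu> * monomial K e"
  unfolding monomial_def by (simp add: prod.remove mult_ac cong: prod.cong_simp)

lemma coeff_power_growth:
  assumes "weight \<kappa> < q"
  shows "\<exists>C. \<forall>j. N (f \<kappa> ^ j) * rmono r \<kappa> ^ j \<le> C * q ^ j"
proof -
  define d where "d = (q - weight \<kappa>) / rmono r \<kappa>"
  have "d > 0"
    using assms rmono_r_pos[of \<kappa>] by (simp add: d_def)
  then obtain C where C: "\<And>j. N (f \<kappa> ^ j) \<le> C * (\<rho> (f \<kappa>) + d) ^ j"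
    using rho_growth by blast
  have "(\<rho> (f \<kappa>) + d) * rmono r \<kappa> = q"
    using rmono_r_pos[of \<kappa>] by (simp add: d_def weight_def field_simps)
  then have "N (f \<kappa> ^ j) * rmono r \<kappa> ^ j \<le> C * q ^ j" for j
    using mult_right_mono[OF C[of j], of "rmono r \<kappa> ^ j"] rmono_r_pos[of \<kappa>]
    by (simp add: power_mult_distrib[symmetric] mult.assoc)
  then show ?thesis
    by blast
qed

lemma monomial_coeff_le:
  assumes "finite K" and C: "\<And>\<kappa> j. \<kappa> \<in> K \<Longrightarrow> N (f \<kappa> ^ j) * rmono r \<kappa> ^ j \<le> C \<kappa> * q ^ j"
  shows "N (monomial K e) * rmono r (monomial_exponent K e) \<le> N 1 * (\<Prod>\<kappa>\<in>K. C \<kappa>) * q ^ sum e K"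
proof -
  have exponent: "rmono r (monomial_exponent K e) = (\<Prod>\<kappa>\<in>K. rmono r \<kappa> ^ e \<kappa>)"
    using rmono_sum[OF r_pos \<open>finite K\<close>, where \<nu> = "\<lambda>\<kappa> i. int (e \<kappa>) * \<kappa> i"]
    by (simp add: monomial_exponent_def rmono_scale[OF r_pos])
  have "N (monomial K e) * rmono r (monomial_exponent K e)
      \<le> N 1 * (\<Prod>\<kappa>\<in>K. N (f \<kappa> ^ e \<kappa>)) * rmono r (monomial_exponent K e)"
    unfolding monomial_def using N_prod_le[OF \<open>finite K\<close>] rmono_r_pos
    by (intro mult_right_mono) (simp_all add: less_imp_le)
  also have "\<dots> = N 1 * (\<Prod>\<kappa>\<in>K. N (f \<kappa> ^ e \<kappa>) * rmono r \<kappa> ^ e \<kappa>)"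
    unfolding exponent by (simp add: prod.distrib mult.assoc)
  also have "\<dots> \<le> N 1 * (\<Prod>\<kappa>\<in>K. C \<kappa> * q ^ e \<kappa>)"
    using C N_nonneg rmono_r_pos by (intro mult_left_mono prod_mono) (simp_all add: less_imp_le)
  also have "\<dots> = N 1 * (\<Prod>\<kappa>\<in>K. C \<kappa>) * q ^ sum e K"
    by (simp add: prod.distrib power_sum mult.assoc)
  finally show ?thesis .
qed

lemma monomial_times_cauchy_term_le:
  assumes "0 \<le> q" "finite K"
    and small: "\<And>\<mu>. \<mu> \<notin> K \<Longrightarrow> N (f \<mu>) * rmono r \<mu> \<le> q"
    and IH: "\<And>\<nu> e. N (monomial K e * laurent_pow N f l \<nu>) * rmono r (\<lambda>i. \<nu> i + monomial_exponent K e i)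
      \<le> C * q ^ (l + sum e K)"
  shows "N (monomial K e * (f \<mu> * laurent_pow N f l (\<lambda>i. \<nu> i - \<mu> i)))
      * rmono r (\<lambda>i. \<nu> i + monomial_exponent K e i) \<le> C * q ^ (Suc l + sum e K)"
proof (cases "\<mu> \<in> K")
  case True
  have "N (monomial K (e(\<mu> := Suc (e \<mu>))) * laurent_pow N f l (\<lambda>i. \<nu> i - \<mu> i))
      * rmono r (\<lambda>i. \<nu> i - \<mu> i + monomial_exponent K (e(\<mu> := Suc (e \<mu>))) i)
      \<le> C * q ^ (l + sum (e(\<mu> := Suc (e \<mu>))) K)"
    by (rule IH)
  then show ?thesis
    unfolding monomial_fun_upd_Suc[OF \<open>finite K\<close> True] sum_fun_upd_Suc[OF \<open>finite K\<close> True]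
      monomial_exponent_fun_upd_Suc[OF \<open>finite K\<close> True]
    by (simp add: algebra_simps)
next
  case False
  let ?y = "monomial K e * laurent_pow N f l (\<lambda>i. \<nu> i - \<mu> i)"
  have shift: "(\<lambda>i. \<nu> i + monomial_exponent K e i - \<mu> i) = (\<lambda>i. \<nu> i - \<mu> i + monomial_exponent K e i)"
    by (simp add: algebra_simps)
  have "N (f \<mu> * ?y) * rmono r (\<lambda>i. \<nu> i + monomial_exponent K e i)
      \<le> (N (f \<mu>) * rmono r \<mu>) * (N ?y * rmono r (\<lambda>i. \<nu> i - \<mu> i + monomial_exponent K e i))"
    using weighted_mult_le[OF N_mult_le N_nonneg, where x = "f \<mu>" and y = ?y
        and \<nu> = "\<lambda>i. \<nu> i + monomial_exponent K e i" and \<mu> = \<mu>]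
    unfolding shift .
  also have "\<dots> \<le> q * (C * q ^ (l + sum e K))"
    using small[OF False] IH[of e "\<lambda>i. \<nu> i - \<mu> i"] \<open>0 \<le> q\<close>
    by (rule mult_mono) (simp_all add: N_nonneg less_imp_le[OF rmono_r_pos])
  finally show ?thesis
    by (simp add: mult_ac)
qed

lemma monomial_times_laurent_pow_coeff_le:
  assumes "0 \<le> q" "finite K"
    and small: "\<And>\<mu>. \<mu> \<notin> K \<Longrightarrow> N (f \<mu>) * rmono r \<mu> \<le> q"
    and monomial_le: "\<And>e. N (monomial K e) * rmono r (monomial_exponent K e) \<le> C * q ^ sum e K"
  shows "N (monomial K e * laurent_pow N f l \<nu>) * rmono r (\<lambda>i. \<nu> i + monomial_exponent K e i)
    \<le> C * q ^ (l + sum e K)"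
proof -
  have "0 \<le> C"
    using monomial_le[of "\<lambda>_. 0"] N_nonneg[of 1] by (simp add: monomial_def monomial_exponent_def)
  show ?thesis
  proof (induction l arbitrary: \<nu> e)
    case 0
    show ?case
      using monomial_le[of e] \<open>0 \<le> C\<close> \<open>0 \<le> q\<close> rmono_r_pos
      by (auto simp: laurent_pow_0 laurent_one_def less_imp_le)
  next
    case (Suc l)
    define W where "W = rmono r (\<lambda>i. \<nu> i + monomial_exponent K e i)"
    have "W > 0"
      unfolding W_def by (rule rmono_r_pos)
    have "N (monomial K e * laurent_pow N f (Suc l) \<nu>) \<le> C * q ^ (Suc l + sum e K) / W"
    proof (rule has_nsum_ultrametric_le[OF has_nsum_left_mult[OF has_nsum_laurent_pow_Suc]])
      show "0 \<le> C * q ^ (Suc l + sum e K) / W"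
        using \<open>0 \<le> C\<close> \<open>0 \<le> q\<close> \<open>W > 0\<close> by simp
      show "N (monomial K e * (f \<mu> * laurent_pow N f l (\<lambda>i. \<nu> i - \<mu> i)))
          \<le> C * q ^ (Suc l + sum e K) / W" for \<mu>
        using monomial_times_cauchy_term_le[OF assms(1-3) Suc.IH] \<open>W > 0\<close>
        by (simp add: W_def pos_le_divide_eq)
    qed (simp_all add: N_add_le)
    then show ?case
      using \<open>W > 0\<close> by (simp add: W_def pos_le_divide_eq)
  qed
qed

lemma laurent_pow_coeff_growth:
  assumes "\<delta> > 0"
  shows "\<exists>C. \<forall>l \<nu>. N (laurent_pow N f l \<nu>) * rmono r \<nu> \<le> C * (max_weight + \<delta>) ^ l"
proof -
  define q where "q = max_weight + \<delta>"
  define K where "K = {\<kappa>. \<delta> \<le> N (f \<kappa>) * rmono r \<kappa>}"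
  have "finite K"
    unfolding K_def using assms by (rule finite_large_coeffs)
  have "0 \<le> q"
    using max_weight_nonneg assms by (simp add: q_def)
  have "\<forall>\<kappa>. \<exists>C. \<forall>j. N (f \<kappa> ^ j) * rmono r \<kappa> ^ j \<le> C * q ^ j"
  proof
    fix \<kappa>
    have "weight \<kappa> < q"
      using weight_le_max_weight[of \<kappa>] assms by (simp add: q_def)
    then show "\<exists>C. \<forall>j. N (f \<kappa> ^ j) * rmono r \<kappa> ^ j \<le> C * q ^ j"
      by (rule coeff_power_growth)
  qed
  then obtain C where C: "\<And>\<kappa> j. N (f \<kappa> ^ j) * rmono r \<kappa> ^ j \<le> C \<kappa> * q ^ j"
    by metis
  have small: "N (f \<mu>) * rmono r \<mu> \<le> q" if "\<mu> \<notin> K" for \<mu>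
    using that max_weight_nonneg by (simp add: K_def q_def)
  have "N (monomial K (\<lambda>_. 0) * laurent_pow N f l \<nu>) * rmono r (\<lambda>i. \<nu> i + monomial_exponent K (\<lambda>_. 0) i)
      \<le> (N 1 * (\<Prod>\<kappa>\<in>K. C \<kappa>)) * q ^ (l + sum (\<lambda>_. 0) K)" for l \<nu>
    using monomial_times_laurent_pow_coeff_le[OF \<open>0 \<le> q\<close> \<open>finite K\<close> small
        monomial_coeff_le[OF \<open>finite K\<close> C]] .
  then show ?thesis
    unfolding q_def by (auto simp: monomial_def monomial_exponent_def)
qed

end

section \<open>Lower bound for the norms of the powers\<close>

lemma finite_set_exposed_point:
  fixes S :: "('n::finite \<Rightarrow> int) set"
  assumes "finite S" "S \<noteq> {}"
  obtains \<nu>0 where "\<nu>0 \<in> S"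
    "\<And>\<mu>. \<mu> \<in> S \<Longrightarrow> \<mu> \<noteq> \<nu>0 \<Longrightarrow> (\<Sum>i\<in>UNIV. \<mu> i * \<nu>0 i) < (\<Sum>i\<in>UNIV. \<nu>0 i * \<nu>0 i)"
proof -
  define sq where "sq \<nu> = (\<Sum>i\<in>UNIV. \<nu> i * \<nu> i)" for \<nu> :: "'n \<Rightarrow> int"
  have "Max (sq ` S) \<in> sq ` S"
    using assms by simp
  then obtain \<nu>0 where "\<nu>0 \<in> S" "sq \<nu>0 = Max (sq ` S)"
    by auto
  then have max: "sq \<mu> \<le> sq \<nu>0" if "\<mu> \<in> S" for \<mu>
    using that assms(1) by simp
  have "(\<Sum>i\<in>UNIV. \<mu> i * \<nu>0 i) < sq \<nu>0" if "\<mu> \<in> S" "\<mu> \<noteq> \<nu>0" for \<mu>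
  proof -
    obtain j where "\<mu> j \<noteq> \<nu>0 j"
      using \<open>\<mu> \<noteq> \<nu>0\<close> by auto
    then have "0 < (\<Sum>i\<in>UNIV. (\<mu> i - \<nu>0 i) * (\<mu> i - \<nu>0 i))"
      by (intro sum_pos2[where i = j]) (auto simp: zero_less_mult_iff)
    also have "\<dots> = sq \<mu> - 2 * (\<Sum>i\<in>UNIV. \<mu> i * \<nu>0 i) + sq \<nu>0"
      by (simp add: sq_def algebra_simps sum.distrib sum_subtractf sum_distrib_left)
    finally show ?thesis
      using max[OF \<open>\<mu> \<in> S\<close>] by linarith
  qed
  then show ?thesis
    using \<open>\<nu>0 \<in> S\<close> that unfolding sq_def by blast
qed

primrec laurent_pow_on ::
  "('n \<Rightarrow> int) set \<Rightarrow> (('n \<Rightarrow> int) \<Rightarrow> 'a::comm_ring_1) \<Rightarrow> nat \<Rightarrow> ('n \<Rightarrow> int) \<Rightarrow> 'a" where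
  "laurent_pow_on S f 0 = laurent_one"
| "laurent_pow_on S f (Suc l) = (\<lambda>\<nu>. \<Sum>\<mu>\<in>S. f \<mu> * laurent_pow_on S f l (\<lambda>i. \<nu> i - \<mu> i))"

lemma laurent_pow_on_eq_0:
  fixes \<phi> :: "('n \<Rightarrow> int) \<Rightarrow> int"
  assumes additive: "\<And>\<nu> \<mu>. \<phi> (\<lambda>i. \<nu> i - \<mu> i) = \<phi> \<nu> - \<phi> \<mu>"
    and bound: "\<And>\<mu>. \<mu> \<in> S \<Longrightarrow> \<phi> \<mu> \<le> c" and "int l * c < \<phi> \<nu>"
  shows "laurent_pow_on S f l \<nu> = 0"
  using assms(3)
proof (induction l arbitrary: \<nu>)
  case 0
  have "\<phi> (\<lambda>_. 0) = 0"
    using additive[of "\<lambda>_. 0" "\<lambda>_. 0"] by simp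
  then show ?case
    using 0 by (auto simp: laurent_one_def)
next
  case (Suc l)
  have "laurent_pow_on S f l (\<lambda>i. \<nu> i - \<mu> i) = 0" if "\<mu> \<in> S" for \<mu>
    using Suc.prems bound[OF that] by (intro Suc.IH) (simp add: additive algebra_simps)
  then show ?case
    by simp
qed

lemma additive_scale:
  fixes \<phi> :: "('n \<Rightarrow> int) \<Rightarrow> int"
  assumes additive: "\<And>\<nu> \<mu>. \<phi> (\<lambda>i. \<nu> i - \<mu> i) = \<phi> \<nu> - \<phi> \<mu>"
  shows "\<phi> (\<lambda>i. int n * \<kappa> i) = int n * \<phi> \<kappa>"
proof (induction n)
  case 0
  then show ?case
    using additive[of "\<lambda>_. 0" "\<lambda>_. 0"] by simp
next
  case (Suc n)
  then show ?case
    using additive[of "\<lambda>i. int (Suc n) * \<kappa> i" \<kappa>] by (simp add: algebra_simps)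
qed

lemma laurent_pow_on_diagonal:
  fixes \<phi> :: "('n \<Rightarrow> int) \<Rightarrow> int"
  assumes "finite S" "\<nu>0 \<in> S"
    and additive: "\<And>\<nu> \<mu>. \<phi> (\<lambda>i. \<nu> i - \<mu> i) = \<phi> \<nu> - \<phi> \<mu>"
    and exposed: "\<And>\<mu>. \<mu> \<in> S \<Longrightarrow> \<mu> \<noteq> \<nu>0 \<Longrightarrow> \<phi> \<mu> < \<phi> \<nu>0"
  shows "laurent_pow_on S f l (\<lambda>i. int l * \<nu>0 i) = f \<nu>0 ^ l"
proof (induction l)
  case 0
  then show ?case
    by (simp add: laurent_one_def)
next
  case (Suc l)
  define v where "v = (\<lambda>i. int (Suc l) * \<nu>0 i)"
  have "laurent_pow_on S f l (\<lambda>i. v i - \<mu> i) = 0" if "\<mu> \<in> S - {\<nu>0}" for \<mu>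
  proof (rule laurent_pow_on_eq_0[OF additive])
    show "\<phi> \<mu>' \<le> \<phi> \<nu>0" if "\<mu>' \<in> S" for \<mu>'
      using exposed[OF that] by (cases "\<mu>' = \<nu>0") auto
    show "int l * \<phi> \<nu>0 < \<phi> (\<lambda>i. v i - \<mu> i)"
      using exposed[of \<mu>] that additive_scale[where \<phi> = \<phi> and n = "Suc l" and \<kappa> = \<nu>0, OF additive]
      by (simp add: additive v_def algebra_simps)
  qed
  then have "(\<Sum>\<mu>\<in>S - {\<nu>0}. f \<mu> * laurent_pow_on S f l (\<lambda>i. v i - \<mu> i)) = 0"
    by (intro sum.neutral) simp
  moreover have "(\<lambda>i. v i - \<nu>0 i) = (\<lambda>i. int l * \<nu>0 i)"
    by (simp add: v_def algebra_simps)
  ultimately have "laurent_pow_on S f (Suc l) v = f \<nu>0 * laurent_pow_on S f l (\<lambda>i. int l * \<nu>0 i)"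
    using sum.remove[OF assms(1,2), of "\<lambda>\<mu>. f \<mu> * laurent_pow_on S f l (\<lambda>i. v i - \<mu> i)"]
    by simp
  then show ?case
    using Suc.IH by (simp add: v_def)
qed

context laurent_series
begin

lemma rho_laurent_pow_on_le:
  assumes "finite S" "0 \<le> M" "\<And>\<mu>. \<mu> \<in> S \<Longrightarrow> weight \<mu> \<le> M"
  shows "\<rho> (laurent_pow_on S f l \<nu>) * rmono r \<nu> \<le> M ^ l"
proof (induction l arbitrary: \<nu>)
  case 0
  show ?case
    using rho_1_le by (simp add: laurent_one_def)
next
  case (Suc l)
  have "\<rho> (f \<mu> * laurent_pow_on S f l (\<lambda>i. \<nu> i - \<mu> i)) * rmono r \<nu> \<le> M ^ Suc l" if "\<mu> \<in> S" for \<mu>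
  proof -
    have "\<rho> (f \<mu> * laurent_pow_on S f l (\<lambda>i. \<nu> i - \<mu> i)) * rmono r \<nu>
        \<le> weight \<mu> * (\<rho> (laurent_pow_on S f l (\<lambda>i. \<nu> i - \<mu> i)) * rmono r (\<lambda>i. \<nu> i - \<mu> i))"
      unfolding weight_def by (rule weighted_mult_le[OF rho_mult_le rho_nonneg])
    also have "\<dots> \<le> M * M ^ l"
      using assms(3)[OF that] Suc.IH \<open>0 \<le> M\<close> rho_nonneg rmono_r_pos
      by (intro mult_mono) (simp_all add: less_imp_le)
    finally show ?thesis
      by simp
  qed
  then show ?case
    using \<open>finite S\<close> \<open>0 \<le> M\<close>
    by (simp only: laurent_pow_on.simps)
      (rule ultrametric_sum_le[where \<phi> = "\<lambda>x. \<rho> x * rmono r \<nu>", OF weighted_ultrametric[OF rho_add_le]];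
        simp)
qed

context
  fixes S :: "('n \<Rightarrow> int) set" and M M' :: real
  assumes finite_S: "finite S" and M_pos: "0 < M" and M'_nonneg: "0 \<le> M'" and M'_le: "M' \<le> M"
    and weight_in_S: "\<And>\<mu>. \<mu> \<in> S \<Longrightarrow> weight \<mu> \<le> M"
    and weight_off_S: "\<And>\<mu>. \<mu> \<notin> S \<Longrightarrow> weight \<mu> \<le> M'"
begin

lemma rho_remainder_cauchy_term_le:
  assumes IH: "\<And>\<nu>. \<rho> (laurent_pow N f l \<nu> - laurent_pow_on S f l \<nu>) * rmono r \<nu> \<le> M' * M ^ l / M"
  shows "\<rho> (f \<mu> * laurent_pow N f l (\<lambda>i. \<nu> i - \<mu> i)
      - (if \<mu> \<in> S then f \<mu> * laurent_pow_on S f l (\<lambda>i. \<nu> i - \<mu> i) else 0)) * rmono r \<nu>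
    \<le> M' * M ^ l"
proof (cases "\<mu> \<in> S")
  case True
  let ?d = "laurent_pow N f l (\<lambda>i. \<nu> i - \<mu> i) - laurent_pow_on S f l (\<lambda>i. \<nu> i - \<mu> i)"
  have "\<rho> (f \<mu> * ?d) * rmono r \<nu> \<le> weight \<mu> * (\<rho> ?d * rmono r (\<lambda>i. \<nu> i - \<mu> i))"
    unfolding weight_def by (rule weighted_mult_le[OF rho_mult_le rho_nonneg])
  also have "\<dots> \<le> M * (M' * M ^ l / M)"
    using weight_in_S[OF True] IH M_pos rho_nonneg rmono_r_pos
    by (intro mult_mono) (simp_all add: less_imp_le)
  finally show ?thesis
    using True M_pos by (simp add: right_diff_distrib)
next
  case False
  have "M' * M ^ l / M \<le> M ^ l"
    using M_pos M'_le by (simp add: divide_le_eq mult_right_mono)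
  then have pow_le: "\<rho> (laurent_pow N f l x) * rmono r x \<le> M ^ l" for x
    using weighted_ultrametric[OF rho_add_le, of "laurent_pow_on S f l x"
        "laurent_pow N f l x - laurent_pow_on S f l x" x] IH[of x]
      rho_laurent_pow_on_le[OF finite_S less_imp_le[OF M_pos] weight_in_S, of l x]
    by simp
  have "\<rho> (f \<mu> * laurent_pow N f l (\<lambda>i. \<nu> i - \<mu> i)) * rmono r \<nu>
      \<le> weight \<mu> * (\<rho> (laurent_pow N f l (\<lambda>i. \<nu> i - \<mu> i)) * rmono r (\<lambda>i. \<nu> i - \<mu> i))"
    unfolding weight_def by (rule weighted_mult_le[OF rho_mult_le rho_nonneg])
  also have "\<dots> \<le> M' * M ^ l"
    by (rule mult_mono[OF weight_off_S[OF False] pow_le M'_nonneg])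
      (simp add: rho_nonneg less_imp_le[OF rmono_r_pos])
  finally show ?thesis
    using False by simp
qed

lemma rho_laurent_pow_remainder_le:
  "\<rho> (laurent_pow N f l \<nu> - laurent_pow_on S f l \<nu>) * rmono r \<nu> \<le> M' * M ^ l / M"
proof (induction l arbitrary: \<nu>)
  case 0
  show ?case
    using M_pos M'_nonneg by (simp add: laurent_pow_0)
next
  case (Suc l)
  have "has_nsum N (\<lambda>\<mu>. f \<mu> * laurent_pow N f l (\<lambda>i. \<nu> i - \<mu> i)
      - (if \<mu> \<in> S then f \<mu> * laurent_pow_on S f l (\<lambda>i. \<nu> i - \<mu> i) else 0))
      UNIV (laurent_pow N f (Suc l) \<nu> - laurent_pow_on S f (Suc l) \<nu>)"
    using has_nsum_diff[OF has_nsum_laurent_pow_Suc has_nsum_finite_support[OF finite_S]] by simp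
  then have "\<rho> (laurent_pow N f (Suc l) \<nu> - laurent_pow_on S f (Suc l) \<nu>) \<le> M' * M ^ l / rmono r \<nu>"
    by (rule has_nsum_rho_le)
      (use rho_remainder_cauchy_term_le[OF Suc.IH] rmono_r_pos[of \<nu>] M_pos M'_nonneg
        in \<open>simp_all add: pos_le_divide_eq\<close>)
  then show ?case
    using rmono_r_pos[of \<nu>] M_pos by (simp add: pos_le_divide_eq)
qed

end

lemma weight_gap:
  assumes "max_weight > 0"
  obtains M' where "0 \<le> M'" "M' < max_weight" "\<And>\<nu>. weight \<nu> \<noteq> max_weight \<Longrightarrow> weight \<nu> \<le> M'"
proof -
  define T where "T = {\<nu>. max_weight / 2 \<le> weight \<nu> \<and> weight \<nu> \<noteq> max_weight}"
  have "max_weight / 2 > 0"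
    using assms by simp
  moreover have "T \<subseteq> {\<nu>. max_weight / 2 \<le> weight \<nu>}"
    by (auto simp: T_def)
  ultimately have "finite T"
    using finite_large_weights finite_subset by blast
  define M' where "M' = Max (insert (max_weight / 2) (weight ` T))"
  have fin: "finite (insert (max_weight / 2) (weight ` T))"
    using \<open>finite T\<close> by simp
  have "weight \<nu> < max_weight" if "\<nu> \<in> T" for \<nu>
    using that weight_le_max_weight[of \<nu>] by (simp add: T_def)
  then have "M' < max_weight"
    unfolding M'_def using fin assms by (simp add: Max_less_iff)
  moreover have "max_weight / 2 \<le> M'"
    unfolding M'_def using fin by (rule Max_ge) simp
  moreover have "weight \<nu> \<le> M'" if "weight \<nu> \<noteq> max_weight" for \<nu>
  proof (cases "\<nu> \<in> T")
    case True
    then show ?thesis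
      unfolding M'_def using fin by simp
  next
    case False
    then show ?thesis
      using that \<open>max_weight / 2 \<le> M'\<close> by (simp add: T_def)
  qed
  moreover have "0 \<le> M'"
    using \<open>max_weight / 2 \<le> M'\<close> assms by linarith
  ultimately show ?thesis
    using that by blast
qed

lemma rho_laurent_pow_on_exposed_ge:
  assumes "l \<ge> 1" "finite S" "\<nu>0 \<in> S"
    and exposed: "\<And>\<mu>. \<mu> \<in> S \<Longrightarrow> \<mu> \<noteq> \<nu>0 \<Longrightarrow> (\<Sum>i\<in>UNIV. \<mu> i * \<nu>0 i) < (\<Sum>i\<in>UNIV. \<nu>0 i * \<nu>0 i)"
  shows "weight \<nu>0 ^ l \<le> \<rho> (laurent_pow_on S f l (\<lambda>i. int l * \<nu>0 i)) * rmono r (\<lambda>i. int l * \<nu>0 i)"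
proof -
  have additive: "(\<Sum>i\<in>UNIV. (\<nu> i - \<mu> i) * \<nu>0 i) = (\<Sum>i\<in>UNIV. \<nu> i * \<nu>0 i) - (\<Sum>i\<in>UNIV. \<mu> i * \<nu>0 i)"
    for \<nu> \<mu> :: "'n \<Rightarrow> int"
    by (simp add: left_diff_distrib sum_subtractf)
  have "laurent_pow_on S f l (\<lambda>i. int l * \<nu>0 i) = f \<nu>0 ^ l"
    using laurent_pow_on_diagonal[where \<phi> = "\<lambda>\<mu>. \<Sum>i\<in>UNIV. \<mu> i * \<nu>0 i",
        OF \<open>finite S\<close> \<open>\<nu>0 \<in> S\<close> additive exposed] .
  moreover have "weight \<nu>0 ^ l = \<rho> (f \<nu>0) ^ l * rmono r (\<lambda>i. int l * \<nu>0 i)"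
    by (simp add: weight_def rmono_scale[OF r_pos] power_mult_distrib)
  moreover have "\<rho> (f \<nu>0) ^ l \<le> \<rho> (f \<nu>0 ^ l)"
    using rho_power_ge[OF \<open>l \<ge> 1\<close>] .
  ultimately show ?thesis
    using rmono_r_pos by (simp add: mult_right_mono less_imp_le)
qed

lemma laurent_pow_norm_lower_bound:
  assumes "l \<ge> 1"
  shows "max_weight ^ l \<le> laurent_norm N r (laurent_pow N f l)"
proof (cases "max_weight = 0")
  case True
  then show ?thesis
    using assms laurent_pow_norm_nonneg by (simp add: power_0_left)
next
  case False
  then have "max_weight > 0"
    using max_weight_nonneg by simp
  define S where "S = {\<nu>. weight \<nu> = max_weight}"
  have "finite S"
    using finite_large_weights[OF \<open>max_weight > 0\<close>] by (rule finite_subset[rotated]) (auto simp: S_def)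
  have "S \<noteq> {}"
    using max_weight_attained by (auto simp: S_def)
  obtain M' where M': "0 \<le> M'" "M' < max_weight" "\<And>\<nu>. weight \<nu> \<noteq> max_weight \<Longrightarrow> weight \<nu> \<le> M'"
    using weight_gap[OF \<open>max_weight > 0\<close>] by blast
  obtain \<nu>0 where "\<nu>0 \<in> S"
    and exposed: "\<And>\<mu>. \<mu> \<in> S \<Longrightarrow> \<mu> \<noteq> \<nu>0 \<Longrightarrow> (\<Sum>i\<in>UNIV. \<mu> i * \<nu>0 i) < (\<Sum>i\<in>UNIV. \<nu>0 i * \<nu>0 i)"
    using finite_set_exposed_point[OF \<open>finite S\<close> \<open>S \<noteq> {}\<close>] by blast
  define v where "v = (\<lambda>i. int l * \<nu>0 i)"
  define p where "p = laurent_pow N f l v"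
  define u where "u = laurent_pow_on S f l v"
  have lower: "max_weight ^ l \<le> \<rho> u * rmono r v"
    using rho_laurent_pow_on_exposed_ge[OF assms \<open>finite S\<close> \<open>\<nu>0 \<in> S\<close> exposed] \<open>\<nu>0 \<in> S\<close>
    by (simp add: S_def u_def v_def)
  have "\<rho> (p - u) * rmono r v \<le> M' * max_weight ^ l / max_weight"
    unfolding p_def u_def using M' weight_le_max_weight
    by (intro rho_laurent_pow_remainder_le[OF \<open>finite S\<close> \<open>max_weight > 0\<close>]) (auto simp: S_def)
  also have "\<dots> < max_weight ^ l"
    using M'(2) \<open>max_weight > 0\<close> by (simp add: pos_divide_less_eq mult_strict_right_mono)
  finally have "\<rho> (p - u) * rmono r v < \<rho> u * rmono r v"
    using lower by linarith
  then have "\<rho> (p - u) < \<rho> u"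
    by (rule mult_right_less_imp_less) (simp add: less_imp_le rmono_r_pos)
  then have "\<rho> u * rmono r v \<le> N p * rmono r v"
    using rho_le_of_diff_less rho_le_N[of p] rmono_r_pos[of v] by (intro mult_right_mono) fastforce+
  also have "\<dots> \<le> laurent_norm N r (laurent_pow N f l)"
    unfolding p_def by (rule coeff_le_laurent_pow_norm)
  finally show ?thesis
    using lower by linarith
qed

lemma tendsto_root_laurent_pow_norm:
  "(\<lambda>l. laurent_norm N r (laurent_pow N f l) powr (1 / real l)) \<longlonglongrightarrow> max_weight"
proof (rule tendsto_root_of_exponential_bounds[OF laurent_pow_norm_nonneg max_weight_nonneg
      laurent_pow_norm_lower_bound])
  fix \<delta> :: real
  assume "\<delta> > 0"
  then obtain C where "\<And>l \<nu>. N (laurent_pow N f l \<nu>) * rmono r \<nu> \<le> C * (max_weight + \<delta>) ^ l"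
    using laurent_pow_coeff_growth by blast
  then show "\<exists>C. \<forall>l. laurent_norm N r (laurent_pow N f l) \<le> C * (max_weight + \<delta>) ^ l"
    by (blast intro: laurent_norm_least)
qed

end

theorem proposition2p3:
  fixes N :: "'a::comm_ring_1 \<Rightarrow> real"
    and r :: "'n::finite \<Rightarrow> real"
    and f :: "('n \<Rightarrow> int) \<Rightarrow> 'a"
  assumes "nonarch_banach_ring N"
    and "\<forall>i. 0 < r i"
    and "f \<in> laurent_ring N r"
  shows "(\<exists>\<nu>. spectral_radius (laurent_norm N r) (laurent_pow N) f
                 = spectral_radius N (\<lambda>a l. a ^ l) (f \<nu>) * rmono r \<nu>) \<and>
         (\<forall>\<nu>. spectral_radius N (\<lambda>a l. a ^ l) (f \<nu>) * rmono r \<nu>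
                 \<le> spectral_radius (laurent_norm N r) (laurent_pow N) f)"
proof -
  interpret laurent_series N r f
    using assms by unfold_locales auto
  have radius: "spectral_radius (laurent_norm N r) (laurent_pow N) f = max_weight"
    unfolding spectral_radius_def by (rule limI[OF tendsto_root_laurent_pow_norm])
  have coeff_radius: "spectral_radius N (\<lambda>a l. a ^ l) (f \<nu>) * rmono r \<nu> = weight \<nu>" for \<nu>
    by (simp add: weight_def \<rho>_def)
  obtain \<nu>m where "max_weight = weight \<nu>m"
    using max_weight_attained by metis
  then show ?thesis
    unfolding radius coeff_radius using weight_le_max_weight by blast
qed

end
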